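(* Let $X$ be a toric Fano variety. If $\Sigma_X$ has two different primitive relations $x+y=z$ and $x+w=v$ (with $x,y,z,w,v\in G(\Sigma_X)$), then $w=-x-y$ and $v=-y$. Consequently there are at most two primitive collections of order $2$ and degree $1$ containing $x$, and if there are two, say $\{x,y\}$ and $\{x,w\}$, the associated primitive relations are $x+y=(-w)$ and $x+w=(-y)$.
   Context: $X$ is a smooth projective toric variety with ample anticanonical divisor, fan $\Sigma_X$, primitive ray generators $G(\Sigma_X)$. A primitive collection is a set of generators not spanning a cone of $\Sigma_X$ while every proper subset does; for $\{x_1,\dots,x_h\}$ with $x_1+\dots+x_h$ in the relative interior of the cone $\langle y_1,\dots,y_k\rangle$, the primitive relation is $x_1+\dots+x_h=a_1y_1+\dots+a_ky_k$ ($a_i$ positive integers) and the degree is $h-\sum a_i$. "$x+y=z$ is a primitive relation" means $\{x,y\}$ is a primitive collection with this relation. *)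

theory Defs
  imports "HOL-Analysis.Analysis"
begin

text \<open>Lattice N = Z^n inside real^n. A smooth (hence simplicial) fan is represented by the
set of generator sets of its cones; the cone of a generator set S is its nonnegative span.\<close>

definition lattice_pt :: "real^'n \<Rightarrow> bool" where
  "lattice_pt v \<longleftrightarrow> (\<forall>i. v $ i \<in> \<int>)"

definition cone_of :: "(real^'n) set \<Rightarrow> (real^'n) set" where
  "cone_of S = {\<Sum>u\<in>S. c u *\<^sub>R u | c. \<forall>u\<in>S. c u \<ge> 0}"

text \<open>A cone generated by S is smooth: S is part of a Z-basis of the lattice,
i.e. S consists of lattice points, is linearly independent, and every lattice point
in the real span of S is an integral combination of S.\<close>
definition smooth_cone :: "(real^'n) set \<Rightarrow> bool" where
  "smooth_cone S \<longleftrightarrow> finite S \<and> (\<forall>u\<in>S. lattice_pt u) \<and> independent S \<and>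
     (\<forall>v. lattice_pt v \<and> v \<in> span S \<longrightarrow> (\<exists>c::real^'n \<Rightarrow> int. v = (\<Sum>u\<in>S. of_int (c u) *\<^sub>R u)))"

definition smooth_complete_fan :: "(real^'n) set set \<Rightarrow> bool" where
  "smooth_complete_fan \<Sigma> \<longleftrightarrow> finite \<Sigma> \<and> {} \<in> \<Sigma> \<and>
     (\<forall>S\<in>\<Sigma>. smooth_cone S) \<and>
     (\<forall>S\<in>\<Sigma>. \<forall>T. T \<subseteq> S \<longrightarrow> T \<in> \<Sigma>) \<and>
     (\<forall>S\<in>\<Sigma>. \<forall>T\<in>\<Sigma>. cone_of S \<inter> cone_of T = cone_of (S \<inter> T)) \<and>
     (\<Union>S\<in>\<Sigma>. cone_of S) = UNIV"

definition gens :: "(real^'n) set set \<Rightarrow> (real^'n) set" where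
  "gens \<Sigma> = \<Union>\<Sigma>"

text \<open>Smooth projective toric variety with ample anticanonical divisor (toric Fano):
the support function of -K (value 1 on every primitive generator, linear on cones) is
strictly convex, i.e. for every maximal cone S there is a linear functional m with
m.u = 1 on S and m.u < 1 for all other generators.  (This is the standard toric
ampleness criterion; it also gives projectivity.)\<close>
definition toric_fano :: "(real^'n) set set \<Rightarrow> bool" where
  "toric_fano \<Sigma> \<longleftrightarrow> smooth_complete_fan \<Sigma> \<and>
     (\<forall>S\<in>\<Sigma>. card S = CARD('n) \<longrightarrow>
        (\<exists>m::real^'n. (\<forall>u\<in>S. m \<bullet> u = 1) \<and> (\<forall>u\<in>gens \<Sigma> - S. m \<bullet> u < 1)))"

definition primitive_collection :: "(real^'n) set set \<Rightarrow> (real^'n) set \<Rightarrow> bool" where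
  "primitive_collection \<Sigma> P \<longleftrightarrow> P \<subseteq> gens \<Sigma> \<and> P \<notin> \<Sigma> \<and> (\<forall>Q. Q \<subset> P \<longrightarrow> Q \<in> \<Sigma>)"

text \<open>Primitive relation: sum of P lies in the relative interior of the cone K (of Sigma),
sum P = sum_{y in K} a_y y with positive integers a_y.\<close>
definition primitive_relation ::
  "(real^'n) set set \<Rightarrow> (real^'n) set \<Rightarrow> (real^'n) set \<Rightarrow> (real^'n \<Rightarrow> nat) \<Rightarrow> bool" where
  "primitive_relation \<Sigma> P K a \<longleftrightarrow> primitive_collection \<Sigma> P \<and> K \<in> \<Sigma> \<and>
     (\<forall>y\<in>K. a y > 0) \<and> (\<Sum>x\<in>P. x) = (\<Sum>y\<in>K. of_nat (a y) *\<^sub>R y)"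

definition prim_rel2 :: "(real^'n) set set \<Rightarrow> real^'n \<Rightarrow> real^'n \<Rightarrow> real^'n \<Rightarrow> bool" where
  "prim_rel2 \<Sigma> x y z \<longleftrightarrow> x \<noteq> y \<and> primitive_relation \<Sigma> {x, y} {z} (\<lambda>_. 1)"

definition prim_degree :: "(real^'n) set set \<Rightarrow> (real^'n) set \<Rightarrow> int \<Rightarrow> bool" where
  "prim_degree \<Sigma> P d \<longleftrightarrow> (\<exists>K a. primitive_relation \<Sigma> P K a \<and>
      d = int (card P) - (\<Sum>y\<in>K. int (a y)))"

end

theory Submission
  imports Defs
begin

(*
  Let x, y, w, x + y and x + w be generators with y \<noteq> w, and put p = x + y + w, so that
  p = (x + y) + w = y + (x + w).  Choose a maximal cone S containing p and the support
  functional m of -K on S: m = 1 on S and, by integrality, m \<le> 0 on all other generators.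
  Then m p, the sum of the nonnegative integer coordinates of p in S, is 0, 1 or 2.
  If it is 2, then x + y, w, y and x + w all lie in S, contradicting linear independence.
  If it is 1, then p is itself a generator in S; comparing the functionals of neighbouring
  maximal cones shows that every maximal cone containing p also contains w, which fails for
  the cone obtained by flipping S across its facet opposite w.  Hence p = 0.
  Only the fact that x + y and x + w are generators enters.
*)

lemma sum_scaleR_independent_coeff_eq:
  fixes B :: "'a::real_vector set"
  assumes "finite B" "independent B" "(\<Sum>u\<in>B. c u *\<^sub>R u) = (\<Sum>u\<in>B. d u *\<^sub>R u)" "b \<in> B"
  shows "c b = d b"
proof (rule ccontr)
  assume "c b \<noteq> d b"
  moreover have "(\<Sum>u\<in>B. (c u - d u) *\<^sub>R u) = 0"
    using assms(3) by (simp add: scaleR_diff_left sum_subtractf)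
  ultimately have "dependent B"
    using assms(1,4) by (subst dependent_finite) (auto intro!: exI[of _ "\<lambda>u. c u - d u"])
  with assms(2) show False by blast
qed

lemma independent_add_eq_add:
  fixes B :: "'a::real_vector set"
  assumes "independent B" "a \<in> B" "b \<in> B" "c \<in> B" "d \<in> B" "a + b = c + d"
  shows "a = c \<or> a = d"
proof -
  have "representation B (a + b) a = representation B (c + d) a"
    using assms(6) by simp
  then show ?thesis
    using assms(1-5)
    by (auto simp: representation_add representation_basis span_base split: if_splits)
qed

lemma convex_cone_sum_mem:
  fixes C :: "'a::real_vector set"
  assumes "convex_cone C" "\<And>i. i \<in> I \<Longrightarrow> f i \<in> C"
  shows "(\<Sum>i\<in>I. f i) \<in> C"
  using assms(2)
proof (induction I rule: infinite_finite_induct)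
  case (insert i I)
  then show ?case using convex_cone_add[OF assms(1)] by simp
qed (use assms(1) convex_cone_iff in auto)

lemma mem_cone_of: "v \<in> cone_of S \<longleftrightarrow> (\<exists>c. (\<forall>u\<in>S. 0 \<le> c u) \<and> v = (\<Sum>u\<in>S. c u *\<^sub>R u))"
  unfolding cone_of_def by blast

lemma cone_ofI: "(\<And>u. u \<in> S \<Longrightarrow> 0 \<le> c u) \<Longrightarrow> (\<Sum>u\<in>S. c u *\<^sub>R u) \<in> cone_of S"
  unfolding mem_cone_of by blast

lemma cone_of_eq_convex_cone_hull:
  assumes "finite S"
  shows "cone_of S = convex_cone hull S"
proof
  show "cone_of S \<subseteq> convex_cone hull S"
  proof
    fix v assume "v \<in> cone_of S"
    then obtain c where "\<forall>u\<in>S. 0 \<le> c u" "v = (\<Sum>u\<in>S. c u *\<^sub>R u)"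
      unfolding mem_cone_of by blast
    moreover have "c u *\<^sub>R u \<in> convex_cone hull S" if "u \<in> S" for u
      using that \<open>\<forall>u\<in>S. 0 \<le> c u\<close>
      by (simp add: convex_cone_scaleR convex_cone_convex_cone_hull hull_inc)
    ultimately show "v \<in> convex_cone hull S"
      by (simp add: convex_cone_sum_mem convex_cone_convex_cone_hull)
  qed
  have "S \<subseteq> cone_of S"
  proof
    fix s assume "s \<in> S"
    then have "(\<Sum>u\<in>S. (if u = s then 1 else 0) *\<^sub>R u) = s"
      using assms by (simp add: if_distrib[of "\<lambda>c. c *\<^sub>R _"] cong: if_cong)
    then show "s \<in> cone_of S"
      using cone_ofI[of S "\<lambda>u. if u = s then 1 else 0"] by simp
  qed
  moreover have "convex_cone (cone_of S)"
    unfolding convex_cone_iff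
  proof (intro conjI ballI allI impI)
    show "0 \<in> cone_of S"
      using cone_ofI[of S "\<lambda>_. 0"] by simp
  next
    fix v w assume "v \<in> cone_of S" "w \<in> cone_of S"
    obtain c where "\<forall>u\<in>S. 0 \<le> c u" "v = (\<Sum>u\<in>S. c u *\<^sub>R u)"
      using \<open>v \<in> cone_of S\<close> unfolding mem_cone_of by blast
    moreover obtain d where "\<forall>u\<in>S. 0 \<le> d u" "w = (\<Sum>u\<in>S. d u *\<^sub>R u)"
      using \<open>w \<in> cone_of S\<close> unfolding mem_cone_of by blast
    ultimately show "v + w \<in> cone_of S"
      using cone_ofI[of S "\<lambda>u. c u + d u"] by (simp add: scaleR_add_left sum.distrib)
  next
    fix v and r :: real assume "v \<in> cone_of S" "0 \<le> r"
    then obtain c where "\<forall>u\<in>S. 0 \<le> c u" "v = (\<Sum>u\<in>S. c u *\<^sub>R u)"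
      unfolding mem_cone_of by blast
    then show "r *\<^sub>R v \<in> cone_of S"
      using cone_ofI[of S "\<lambda>u. r * c u"] \<open>0 \<le> r\<close> by (simp add: scaleR_sum_right)
  qed
  ultimately show "convex_cone hull S \<subseteq> cone_of S"
    by (rule hull_minimal)
qed

lemma closed_cone_of: "finite S \<Longrightarrow> closed (cone_of S)"
  by (simp add: cone_of_eq_convex_cone_hull closed_convex_cone_hull)

lemma smooth_complete_fanD:
  assumes "smooth_complete_fan \<Sigma>"
  shows "finite \<Sigma>" and "S \<in> \<Sigma> \<Longrightarrow> smooth_cone S" and "S \<in> \<Sigma> \<Longrightarrow> T \<subseteq> S \<Longrightarrow> T \<in> \<Sigma>"
    and "S \<in> \<Sigma> \<Longrightarrow> T \<in> \<Sigma> \<Longrightarrow> cone_of S \<inter> cone_of T = cone_of (S \<inter> T)"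
    and "(\<Union>S\<in>\<Sigma>. cone_of S) = UNIV"
  using assms unfolding smooth_complete_fan_def by simp_all

lemma fan_coneD:
  assumes "smooth_complete_fan \<Sigma>" "S \<in> \<Sigma>"
  shows "finite S" and "independent S" and "u \<in> S \<Longrightarrow> lattice_pt u"
    and "lattice_pt v \<Longrightarrow> v \<in> span S \<Longrightarrow> \<exists>c::real^'n \<Rightarrow> int. v = (\<Sum>u\<in>S. of_int (c u) *\<^sub>R u)"
  using smooth_complete_fanD(2)[OF assms] unfolding smooth_cone_def by simp_all

lemma gens_nonzero: "smooth_complete_fan \<Sigma> \<Longrightarrow> g \<in> gens \<Sigma> \<Longrightarrow> g \<noteq> 0"
  unfolding gens_def using fan_coneD(2) dependent_zero by fastforce

lemma gens_lattice_pt: "smooth_complete_fan \<Sigma> \<Longrightarrow> g \<in> gens \<Sigma> \<Longrightarrow> lattice_pt g"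
  unfolding gens_def using fan_coneD(3) by fastforce

lemma lattice_pt_add: "lattice_pt u \<Longrightarrow> lattice_pt v \<Longrightarrow> lattice_pt (u + v)"
  by (simp add: lattice_pt_def)

definition maximal_cone :: "(real^'n) set set \<Rightarrow> (real^'n) set \<Rightarrow> bool" where
  "maximal_cone \<Sigma> T \<longleftrightarrow> T \<in> \<Sigma> \<and> card T = CARD('n)"

lemma maximal_coneD:
  fixes \<Sigma> :: "(real^'n) set set"
  assumes "smooth_complete_fan \<Sigma>" "maximal_cone \<Sigma> T"
  shows "T \<in> \<Sigma>" "card T = CARD('n)" "finite T" "independent T" "span T = UNIV"
proof -
  show "T \<in> \<Sigma>" "card T = CARD('n)"
    using assms(2) unfolding maximal_cone_def by auto
  then show "finite T" "independent T" "span T = UNIV"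
    using fan_coneD(1,2)[OF assms(1)] card_ge_dim_independent[of T UNIV] by auto
qed

lemma cone_of_independent_coeff_nonneg:
  assumes "finite T" "independent T" "(\<Sum>u\<in>T. c u *\<^sub>R u) \<in> cone_of T" "u \<in> T"
  shows "0 \<le> c u"
proof -
  obtain d where d: "\<forall>u\<in>T. 0 \<le> d u" "(\<Sum>u\<in>T. c u *\<^sub>R u) = (\<Sum>u\<in>T. d u *\<^sub>R u)"
    using assms(3) unfolding mem_cone_of by blast
  have "c u = d u"
    by (rule sum_scaleR_independent_coeff_eq[OF assms(1,2) d(2) assms(4)])
  with d(1) assms(4) show ?thesis
    by simp
qed

lemma maximal_cone_lattice_coords:
  fixes \<Sigma> :: "(real^'n) set set"
  assumes "smooth_complete_fan \<Sigma>" "maximal_cone \<Sigma> T" "lattice_pt v"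
  shows "\<exists>c::real^'n \<Rightarrow> int. v = (\<Sum>u\<in>T. of_int (c u) *\<^sub>R u)"
  using fan_coneD(4)[OF assms(1) maximal_coneD(1)[OF assms(1,2)] assms(3)]
    maximal_coneD(5)[OF assms(1,2)] by blast

lemma maximal_cone_lattice_cone_coords:
  fixes \<Sigma> :: "(real^'n) set set"
  assumes fan: "smooth_complete_fan \<Sigma>" and T: "maximal_cone \<Sigma> T"
    and v: "lattice_pt v" "v \<in> cone_of T"
  shows "\<exists>d::real^'n \<Rightarrow> nat. v = (\<Sum>u\<in>T. of_nat (d u) *\<^sub>R u)"
proof -
  obtain c :: "real^'n \<Rightarrow> int" where c: "v = (\<Sum>u\<in>T. of_int (c u) *\<^sub>R u)"
    using maximal_cone_lattice_coords[OF fan T v(1)] by blast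
  have "0 \<le> c u" if "u \<in> T" for u
    using cone_of_independent_coeff_nonneg[OF maximal_coneD(3,4)[OF fan T], of "\<lambda>u. of_int (c u)"]
      v(2) c that by simp
  then have "v = (\<Sum>u\<in>T. of_nat (nat (c u)) *\<^sub>R u)"
    unfolding c by (intro sum.cong) auto
  then show ?thesis
    by (intro exI[of _ "\<lambda>u. nat (c u)"])
qed

lemma toric_fano_fan: "toric_fano \<Sigma> \<Longrightarrow> smooth_complete_fan \<Sigma>"
  unfolding toric_fano_def by blast

lemma fano_maximal_cone_functional:
  fixes \<Sigma> :: "(real^'n) set set"
  assumes fano: "toric_fano \<Sigma>" and T: "maximal_cone \<Sigma> T"
  shows "\<exists>m. (\<forall>u\<in>T. m \<bullet> u = 1) \<and> (\<forall>g\<in>gens \<Sigma> - T. m \<bullet> g \<le> 0) \<and> (\<forall>g\<in>gens \<Sigma>. m \<bullet> g \<le> 1)"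
proof -
  have fan: "smooth_complete_fan \<Sigma>"
    using fano by (rule toric_fano_fan)
  obtain m where m1: "\<forall>u\<in>T. m \<bullet> u = 1" and m2: "\<forall>g\<in>gens \<Sigma> - T. m \<bullet> g < 1"
    using fano T unfolding toric_fano_def maximal_cone_def by blast
  have "m \<bullet> g \<le> 0" if g: "g \<in> gens \<Sigma> - T" for g
  proof -
    obtain c :: "real^'n \<Rightarrow> int" where "g = (\<Sum>u\<in>T. of_int (c u) *\<^sub>R u)"
      using maximal_cone_lattice_coords[OF fan T] gens_lattice_pt[OF fan] g by blast
    \<comment> \<open>m takes integer values on lattice points, so m g < 1 forces m g \<le> 0.\<close>
    then have mg: "m \<bullet> g = of_int (\<Sum>u\<in>T. c u)"
      by (simp add: inner_sum_right m1)
    moreover have "m \<bullet> g < 1"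
      using m2 g by blast
    ultimately have "(\<Sum>u\<in>T. c u) \<le> 0"
      by (metis of_int_less_1_iff int_one_le_iff_zero_less not_le)
    then show ?thesis
      by (simp only: mg of_int_le_0_iff)
  qed
  with m1 show ?thesis
    by (metis DiffI order.refl order_trans zero_le_one)
qed

lemma finite_maximal_cones:
  "smooth_complete_fan \<Sigma> \<Longrightarrow> finite {T. maximal_cone \<Sigma> T}"
  using smooth_complete_fanD(1) by (rule finite_subset[rotated]) (auto simp: maximal_cone_def)

lemma interior_Union_closed_empty:
  fixes \<A> :: "'a::topological_space set set"
  assumes "finite \<A>" "\<And>A. A \<in> \<A> \<Longrightarrow> closed A" "\<And>A. A \<in> \<A> \<Longrightarrow> interior A = {}"
  shows "interior (\<Union>\<A>) = {}"
  using assms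
proof (induction \<A> rule: finite_induct)
  case (insert A \<A>)
  then have "interior (\<Union>\<A> \<union> A) = interior (\<Union>\<A>)"
    by (intro interior_closed_Un_empty_interior closed_Union) auto
  with insert show ?case by (simp add: Un_commute)
qed simp

lemma cone_of_subset_span: "cone_of S \<subseteq> span S"
  unfolding cone_of_def by (auto intro!: span_sum span_scale intro: span_base)

lemma maximal_cones_cover:
  fixes \<Sigma> :: "(real^'n) set set"
  assumes fan: "smooth_complete_fan \<Sigma>"
  shows "\<exists>T. maximal_cone \<Sigma> T \<and> p \<in> cone_of T"
proof -
  define M where "M = (\<Union>T\<in>{T. maximal_cone \<Sigma> T}. cone_of T)"
  define V where "V = (\<Union>S\<in>{S\<in>\<Sigma>. card S \<noteq> CARD('n)}. span S)"
  have "closed M"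
    unfolding M_def
    using finite_maximal_cones[OF fan] maximal_coneD(3)[OF fan]
    by (intro closed_UN ballI closed_cone_of) auto
  have "interior (span S) = {}" if "S \<in> \<Sigma>" "card S \<noteq> CARD('n)" for S
  proof -
    have "independent S" using fan_coneD(2)[OF fan that(1)] .
    then have "dim (span S) < DIM(real^'n)"
      using that(2) independent_card_le[of S] by (simp add: dim_eq_card_independent)
    then show ?thesis by (rule empty_interior_lowdim)
  qed
  then have "interior V = {}"
    unfolding V_def using smooth_complete_fanD(1)[OF fan]
    by (intro interior_Union_closed_empty) auto
  have "- M \<subseteq> V"
    using smooth_complete_fanD(5)[OF fan] cone_of_subset_span
    unfolding M_def V_def maximal_cone_def by blast
  then have "- M \<subseteq> interior V"
    using \<open>closed M\<close> by (intro interior_maximal) auto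
  with \<open>interior V = {}\<close> have "p \<in> M" by blast
  then show ?thesis unfolding M_def by blast
qed

lemma closed_cover_near_start:
  fixes f :: "real \<Rightarrow> 'a::topological_space"
  assumes "continuous_on UNIV f" "finite \<C>" "\<And>C. C \<in> \<C> \<Longrightarrow> closed C"
    and "\<And>\<epsilon>. 0 < \<epsilon> \<Longrightarrow> \<epsilon> \<le> 1 \<Longrightarrow> f \<epsilon> \<in> \<Union>\<C>"
  shows "\<exists>C\<in>\<C>. f 0 \<in> C \<and> (\<exists>\<epsilon>>0. f \<epsilon> \<in> C)"
proof -
  define \<D> where "\<D> = {C\<in>\<C>. \<exists>\<epsilon>>0. f \<epsilon> \<in> C}"
  have "{0<..1} \<subseteq> (\<Union>C\<in>\<D>. f -` C)"
    using assms(4) unfolding \<D>_def by fastforce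
  moreover have "closed (\<Union>C\<in>\<D>. f -` C)"
    using assms(1-3) unfolding \<D>_def by (intro closed_UN ballI closed_vimage) auto
  ultimately have "closure {0<..1::real} \<subseteq> (\<Union>C\<in>\<D>. f -` C)"
    by (rule closure_minimal)
  moreover have "(0::real) \<in> closure {0<..1}"
    by simp
  ultimately show ?thesis
    unfolding \<D>_def by blast
qed

lemma independent_sum_mem_cone_of_subset:
  assumes "finite F" "independent F" "G \<subseteq> F" "(\<Sum>u\<in>F. u) \<in> cone_of G"
  shows "F \<subseteq> G"
proof
  fix f assume "f \<in> F"
  obtain c where c: "(\<Sum>u\<in>F. u) = (\<Sum>u\<in>G. c u *\<^sub>R u)"
    using assms(4) unfolding mem_cone_of by blast
  also have "\<dots> = (\<Sum>u\<in>F. if u \<in> G then c u *\<^sub>R u else 0)"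
    using sum.inter_restrict[OF assms(1), of "\<lambda>u. c u *\<^sub>R u" G] Int_absorb1[OF assms(3)] by simp
  also have "\<dots> = (\<Sum>u\<in>F. (if u \<in> G then c u else 0) *\<^sub>R u)"
    by (rule sum.cong) auto
  finally have "1 = (if f \<in> G then c f else 0)"
    using sum_scaleR_independent_coeff_eq[OF assms(1,2) _ \<open>f \<in> F\<close>,
        of "\<lambda>_. 1" "\<lambda>u. if u \<in> G then c u else 0"]
    by simp
  then show "f \<in> G"
    by (auto split: if_splits)
qed

lemma maximal_cone_at_segment_start:
  fixes \<Sigma> :: "(real^'n) set set"
  assumes fan: "smooth_complete_fan \<Sigma>"
  shows "\<exists>T. maximal_cone \<Sigma> T \<and> p \<in> cone_of T \<and> (\<exists>\<epsilon>>0. p - \<epsilon> *\<^sub>R t \<in> cone_of T)"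
proof -
  have "\<exists>C\<in>cone_of ` {T. maximal_cone \<Sigma> T}.
      p - 0 *\<^sub>R t \<in> C \<and> (\<exists>\<epsilon>>0. p - \<epsilon> *\<^sub>R t \<in> C)"
  proof (rule closed_cover_near_start)
    show "continuous_on UNIV (\<lambda>\<epsilon>. p - \<epsilon> *\<^sub>R t)"
      by (intro continuous_intros)
    show "finite (cone_of ` {T. maximal_cone \<Sigma> T})"
      using finite_maximal_cones[OF fan] by simp
    show "closed C" if "C \<in> cone_of ` {T. maximal_cone \<Sigma> T}" for C
      using that maximal_coneD(3)[OF fan] closed_cone_of by auto
    show "p - \<epsilon> *\<^sub>R t \<in> \<Union>(cone_of ` {T. maximal_cone \<Sigma> T})" for \<epsilon>
      using maximal_cones_cover[OF fan] by blast
  qed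
  then show ?thesis
    by auto
qed

lemma maximal_cone_flip:
  fixes \<Sigma> :: "(real^'n) set set"
  assumes fan: "smooth_complete_fan \<Sigma>" and T: "maximal_cone \<Sigma> T" and t: "t \<in> T"
  shows "\<exists>T'. maximal_cone \<Sigma> T' \<and> T - {t} \<subseteq> T' \<and> t \<notin> T'"
proof -
  note T_facts = maximal_coneD[OF fan T]
  define F where "F = T - {t}"
  have "F \<in> \<Sigma>" "finite F" "independent F"
    using smooth_complete_fanD(3)[OF fan T_facts(1)] T_facts(3) independent_mono[OF T_facts(4)]
    unfolding F_def by auto
  \<comment> \<open>Leave the barycentre of the facet F in the direction away from t.\<close>
  obtain T' \<epsilon> where T': "maximal_cone \<Sigma> T'" and "(\<Sum>u\<in>F. u) \<in> cone_of T'"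
    and "\<epsilon> > 0" and q_\<epsilon>: "(\<Sum>u\<in>F. u) - \<epsilon> *\<^sub>R t \<in> cone_of T'"
    using maximal_cone_at_segment_start[OF fan] by blast
  note T'_facts = maximal_coneD[OF fan T']
  have "(\<Sum>u\<in>F. u) \<in> cone_of F"
    using cone_ofI[of F "\<lambda>_. 1"] by simp
  with \<open>(\<Sum>u\<in>F. u) \<in> cone_of T'\<close> have "(\<Sum>u\<in>F. u) \<in> cone_of (F \<inter> T')"
    using smooth_complete_fanD(4)[OF fan \<open>F \<in> \<Sigma>\<close> T'_facts(1)] by auto
  then have "F \<subseteq> T'"
    using independent_sum_mem_cone_of_subset[OF \<open>finite F\<close> \<open>independent F\<close>] by blast
  have "t \<notin> T'"
  proof
    assume "t \<in> T'"
    with \<open>F \<subseteq> T'\<close> have "T \<subseteq> T'"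
      unfolding F_def by blast
    then have "T' = T"
      using card_subset_eq[OF T'_facts(3)] T_facts(2) T'_facts(2) by metis
    have "(\<Sum>u\<in>T - {t}. (if u = t then - \<epsilon> else 1) *\<^sub>R u) = (\<Sum>u\<in>T - {t}. u)"
      by (rule sum.cong) auto
    then have "(\<Sum>u\<in>F. u) - \<epsilon> *\<^sub>R t = (\<Sum>u\<in>T. (if u = t then - \<epsilon> else 1) *\<^sub>R u)"
      using sum.remove[OF T_facts(3) t, of "\<lambda>u. (if u = t then - \<epsilon> else 1) *\<^sub>R u"]
      unfolding F_def by simp
    then have "0 \<le> - \<epsilon>"
      using cone_of_independent_coeff_nonneg[OF T_facts(3,4) _ t] q_\<epsilon> \<open>T' = T\<close>
      by fastforce
    with \<open>\<epsilon> > 0\<close> show False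
      by simp
  qed
  with T' \<open>F \<subseteq> T'\<close> show ?thesis
    unfolding F_def by blast
qed

lemma fano_sum_cone_membership:
  fixes \<Sigma> :: "(real^'n) set set"
  assumes fano: "toric_fano \<Sigma>" and T: "maximal_cone \<Sigma> T"
    and gens: "x \<in> gens \<Sigma>" "y \<in> gens \<Sigma>" "w \<in> gens \<Sigma>" "x + y \<in> gens \<Sigma>" "x + w \<in> gens \<Sigma>"
    and u: "x + y + w \<in> T"
  shows "w \<notin> T \<Longrightarrow> x + y \<in> T" and "x + y \<in> T \<Longrightarrow> y \<in> T"
proof -
  have fan: "smooth_complete_fan \<Sigma>"
    using fano by (rule toric_fano_fan)
  obtain m where m1: "\<forall>u\<in>T. m \<bullet> u = 1" and m0: "\<forall>g\<in>gens \<Sigma> - T. m \<bullet> g \<le> 0"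
    and le_1: "\<forall>g\<in>gens \<Sigma>. m \<bullet> g \<le> 1"
    using fano_maximal_cone_functional[OF fano T] by blast
  have in_T: "g \<in> T" if "g \<in> gens \<Sigma>" "0 < m \<bullet> g" for g
    using m0 that by (meson DiffI not_le)
  have sum_1: "m \<bullet> x + m \<bullet> y + m \<bullet> w = 1"
    using bspec[OF m1 u] by (simp add: inner_add_right)
  show "x + y \<in> T" if "w \<notin> T"
  proof (rule in_T[OF gens(4)])
    have "m \<bullet> w \<le> 0"
      using m0 gens(3) that by blast
    with sum_1 show "0 < m \<bullet> (x + y)"
      by (simp add: inner_add_right)
  qed
  show "y \<in> T" if "x + y \<in> T"
  proof (rule ccontr)
    assume "y \<notin> T"
    then have "m \<bullet> y \<le> 0"
      using m0 gens(2) by blast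
    moreover have "m \<bullet> x + m \<bullet> y = 1"
      using bspec[OF m1 that] by (simp add: inner_add_right)
    ultimately have "m \<bullet> x = 1" "m \<bullet> w = 0"
      using bspec[OF le_1 gens(1)] sum_1 by linarith+
    then have "x \<in> T" "x + w \<in> T"
      using in_T gens(1,5) by (auto simp: inner_add_right)
    moreover have "x + (x + y + w) = (x + y) + (x + w)"
      by (simp add: algebra_simps)
    ultimately have "x = x + y \<or> x = x + w"
      using independent_add_eq_add[OF maximal_coneD(4)[OF fan T]] u that by blast
    then show False
      using gens_nonzero[OF fan] gens(2,3) by auto
  qed
qed

lemma relation_sum_not_in_maximal_cone:
  fixes \<Sigma> :: "(real^'n) set set"
  assumes fano: "toric_fano \<Sigma>" and S: "maximal_cone \<Sigma> S"
    and gens: "x \<in> gens \<Sigma>" "y \<in> gens \<Sigma>" "w \<in> gens \<Sigma>" "x + y \<in> gens \<Sigma>" "x + w \<in> gens \<Sigma>"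
  shows "x + y + w \<notin> S"
proof
  have fan: "smooth_complete_fan \<Sigma>"
    using fano by (rule toric_fano_fan)
  have nonzero: "x \<noteq> 0" "w \<noteq> 0" "x + y \<noteq> 0" "x + w \<noteq> 0"
    using gens_nonzero[OF fan] gens by auto
  have w_in: "w \<in> T" if T: "maximal_cone \<Sigma> T" "x + y + w \<in> T" for T
  proof (rule ccontr)
    assume "w \<notin> T"
    then have "x + y \<in> T" "y \<in> T"
      using fano_sum_cone_membership[OF fano T(1) gens T(2)] by auto
    then obtain T' where T': "maximal_cone \<Sigma> T'" "T - {y} \<subseteq> T'" "y \<notin> T'"
      using maximal_cone_flip[OF fan T(1)] by blast
    have "x + y + w \<noteq> y" "x + y \<noteq> y"
      using nonzero by (auto simp: algebra_simps)
    then have "x + y + w \<in> T'" "x + y \<in> T'"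
      using T(2) \<open>x + y \<in> T\<close> T'(2) by auto
    then show False
      using fano_sum_cone_membership(2)[OF fano T'(1) gens] T'(3) by blast
  qed
  assume "x + y + w \<in> S"
  then have "w \<in> S"
    by (rule w_in[OF S])
  then obtain S' where S': "maximal_cone \<Sigma> S'" "S - {w} \<subseteq> S'" "w \<notin> S'"
    using maximal_cone_flip[OF fan S] by blast
  have "x + y + w \<noteq> w"
    using nonzero by simp
  then have "x + y + w \<in> S'"
    using \<open>x + y + w \<in> S\<close> S'(2) by auto
  with w_in[OF S'(1)] S'(3) show False by blast
qed

lemma fano_add_gens_mem_maximal_cone:
  fixes \<Sigma> :: "(real^'n) set set"
  assumes fano: "toric_fano \<Sigma>" and S: "maximal_cone \<Sigma> S"
    and gens: "a \<in> gens \<Sigma>" "b \<in> gens \<Sigma>" and "a + b \<in> cone_of S"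
  shows "a + b = 0 \<or> a + b \<in> S \<or> (a \<in> S \<and> b \<in> S)"
proof -
  have fan: "smooth_complete_fan \<Sigma>"
    using fano by (rule toric_fano_fan)
  have "lattice_pt (a + b)"
    using gens gens_lattice_pt[OF fan] by (simp add: lattice_pt_add)
  then obtain d :: "real^'n \<Rightarrow> nat" where d: "a + b = (\<Sum>u\<in>S. of_nat (d u) *\<^sub>R u)"
    using maximal_cone_lattice_cone_coords[OF fan S] \<open>a + b \<in> cone_of S\<close> by blast
  note fin = maximal_coneD(3)[OF fan S]
  obtain m where m1: "\<forall>u\<in>S. m \<bullet> u = 1" and m0: "\<forall>g\<in>gens \<Sigma> - S. m \<bullet> g \<le> 0"
    and le_1: "\<forall>g\<in>gens \<Sigma>. m \<bullet> g \<le> 1"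
    using fano_maximal_cone_functional[OF fano S] by blast
  define k where "k = (\<Sum>u\<in>S. d u)"
  have "m \<bullet> (a + b) = of_nat k"
    unfolding d k_def by (simp add: inner_sum_right m1)
  then have level: "m \<bullet> a + m \<bullet> b = of_nat k"
    by (simp add: inner_add_right)
  then have "real k \<le> 2"
    using bspec[OF le_1 gens(1)] bspec[OF le_1 gens(2)] by linarith
  then consider "k = 0" | "k = 1" | "k = 2"
    by linarith
  then show ?thesis
  proof cases
    case 1
    then have "a + b = 0"
      using fin unfolding d k_def by simp
    then show ?thesis ..
  next
    case 2
    then obtain u where "u \<in> S" "d u = 1" "\<forall>v\<in>S. u \<noteq> v \<longrightarrow> d v = 0"
      using sum_eq_1_iff[OF fin] unfolding k_def by blast
    then have "a + b = u"
      unfolding d by (simp add: if_distrib[of "\<lambda>c. c *\<^sub>R _"] sum.cong[of S S _ "\<lambda>v. if v = u then v else 0"] fin)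
    with \<open>u \<in> S\<close> show ?thesis
      by blast
  next
    case 3
    with level bspec[OF le_1 gens(1)] bspec[OF le_1 gens(2)] have "m \<bullet> a = 1" "m \<bullet> b = 1"
      by linarith+
    with m0 gens have "a \<in> S" "b \<in> S"
      by (metis DiffI not_one_le_zero)+
    then show ?thesis
      by blast
  qed
qed

lemma fano_gens_add_eq:
  fixes \<Sigma> :: "(real^'n) set set"
  assumes fano: "toric_fano \<Sigma>"
    and gens: "x \<in> gens \<Sigma>" "y \<in> gens \<Sigma>" "w \<in> gens \<Sigma>" "x + y \<in> gens \<Sigma>" "x + w \<in> gens \<Sigma>"
    and "y \<noteq> w"
  shows "w = - x - y"
proof -
  have fan: "smooth_complete_fan \<Sigma>"
    using fano by (rule toric_fano_fan)
  obtain S where S: "maximal_cone \<Sigma> S" "x + y + w \<in> cone_of S"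
    using maximal_cones_cover[OF fan] by blast
  have "x + y + w \<notin> S"
    using relation_sum_not_in_maximal_cone[OF fano S(1) gens] .
  moreover have "x + y + w = y + (x + w)"
    by (simp add: algebra_simps)
  ultimately consider "x + y + w = 0" | "x + y \<in> S" "w \<in> S" "y \<in> S" "x + w \<in> S"
    using fano_add_gens_mem_maximal_cone[OF fano S(1)] gens S(2) by metis
  then show ?thesis
  proof cases
    case 1
    then show ?thesis
      by (simp add: algebra_simps add_eq_0_iff2)
  next
    case 2
    then have "x + y = y \<or> x + y = x + w"
      using independent_add_eq_add[OF maximal_coneD(4)[OF fan S(1)]] \<open>x + y + w = y + (x + w)\<close>
      by blast
    then show ?thesis
      using gens_nonzero[OF fan gens(1)] \<open>y \<noteq> w\<close> by auto
  qed
qed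

lemma prim_rel2D:
  assumes "prim_rel2 \<Sigma> x y z"
  shows "x \<noteq> y" "x \<in> gens \<Sigma>" "y \<in> gens \<Sigma>" "z \<in> gens \<Sigma>" "z = x + y"
proof -
  have "x \<noteq> y" "{x, y} \<subseteq> gens \<Sigma>" "{z} \<in> \<Sigma>" "(\<Sum>u\<in>{x, y}. u) = z"
    using assms unfolding prim_rel2_def primitive_relation_def primitive_collection_def
    by simp_all
  then show "x \<noteq> y" "x \<in> gens \<Sigma>" "y \<in> gens \<Sigma>" "z \<in> gens \<Sigma>" "z = x + y"
    unfolding gens_def by auto
qed

lemma prim_rel2_common_gen:
  fixes \<Sigma> :: "(real^'n) set set"
  assumes "toric_fano \<Sigma>" "prim_rel2 \<Sigma> x y z" "prim_rel2 \<Sigma> x w v" "(y, z) \<noteq> (w, v)"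
  shows "w = - x - y \<and> v = - y"
proof -
  note r1 = prim_rel2D[OF assms(2)] and r2 = prim_rel2D[OF assms(3)]
  have "y \<noteq> w"
    using assms(4) r1(5) r2(5) by auto
  moreover have "x + y \<in> gens \<Sigma>" "x + w \<in> gens \<Sigma>"
    using r1(4,5) r2(4,5) by simp_all
  ultimately have "w = - x - y"
    using fano_gens_add_eq[OF assms(1) r1(2,3) r2(3)] by blast
  with r2(5) show ?thesis by simp
qed

lemma prim_degree_one_pair:
  assumes "primitive_collection \<Sigma> {x, y}" "x \<noteq> y" "prim_degree \<Sigma> {x, y} 1"
  shows "prim_rel2 \<Sigma> x y (x + y)"
proof -
  obtain K a where rel: "primitive_relation \<Sigma> {x, y} K a"
    and "1 = int (card {x, y}) - (\<Sum>u\<in>K. int (a u))"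
    using assms(3) unfolding prim_degree_def by blast
  then have "(\<Sum>u\<in>K. a u) = 1"
    using assms(2) by (simp flip: of_nat_sum)
  then have "finite K"
    using sum.infinite by fastforce
  then obtain z where z: "z \<in> K" "a z = 1" "\<forall>u\<in>K. z \<noteq> u \<longrightarrow> a u = 0"
    using sum_eq_1_iff \<open>(\<Sum>u\<in>K. a u) = 1\<close> by blast
  have pos: "\<forall>u\<in>K. a u > 0" and "x + y = (\<Sum>u\<in>K. of_nat (a u) *\<^sub>R u)"
    using rel assms(2) unfolding primitive_relation_def by auto
  moreover from z pos have "K = {z}"
    by fastforce
  ultimately have "x + y = z"
    using z(2) by simp
  with rel \<open>K = {z}\<close> z(2) assms(2) show ?thesis
    unfolding prim_rel2_def primitive_relation_def by simp
qed

lemma card_two_containing: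
  assumes "x \<in> P" "card P = 2"
  shows "\<exists>y. P = {x, y} \<and> x \<noteq> y"
  using assms by (auto simp: card_2_iff doubleton_eq_iff)

lemma card_degree_one_pairs_le_2:
  fixes \<Sigma> :: "(real^'n) set set"
  assumes fano: "toric_fano \<Sigma>"
  shows "card {P. x \<in> P \<and> primitive_collection \<Sigma> P \<and> card P = 2 \<and> prim_degree \<Sigma> P 1} \<le> 2"
    (is "card ?Q \<le> 2")
proof -
  have rel: "\<exists>y. P = {x, y} \<and> prim_rel2 \<Sigma> x y (x + y)" if "P \<in> ?Q" for P
    using that card_two_containing[of x P] prim_degree_one_pair by blast
  show ?thesis
  proof (cases "?Q = {}")
    case True
    then show ?thesis
      by (metis card.empty zero_le)
  next
    case False
    then obtain y0 where y0: "prim_rel2 \<Sigma> x y0 (x + y0)"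
      using rel by blast
    have "?Q \<subseteq> {{x, y0}, {x, - x - y0}}"
    proof
      fix P assume "P \<in> ?Q"
      then obtain y where "P = {x, y}" "prim_rel2 \<Sigma> x y (x + y)"
        using rel by blast
      with prim_rel2_common_gen[OF fano y0] show "P \<in> {{x, y0}, {x, - x - y0}}"
        by (cases "y = y0") auto
    qed
    then have "card ?Q \<le> card {{x, y0}, {x, - x - y0}}"
      by (intro card_mono) auto
    also have "\<dots> \<le> 2"
      by (rule card_insert_le_m1) auto
    finally show ?thesis .
  qed
qed

lemma degree_one_pairs_relations:
  fixes \<Sigma> :: "(real^'n) set set"
  assumes fano: "toric_fano \<Sigma>" and "y \<noteq> w"
    and "primitive_collection \<Sigma> {x, y}" "card {x, y} = 2" "prim_degree \<Sigma> {x, y} 1"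
    and "primitive_collection \<Sigma> {x, w}" "card {x, w} = 2" "prim_degree \<Sigma> {x, w} 1"
  shows "prim_rel2 \<Sigma> x y (- w) \<and> prim_rel2 \<Sigma> x w (- y)"
proof -
  have ry: "prim_rel2 \<Sigma> x y (x + y)" and rw: "prim_rel2 \<Sigma> x w (x + w)"
    using assms(3-8) prim_degree_one_pair by fastforce+
  then have "w = - x - y"
    using prim_rel2_common_gen[OF fano ry rw] \<open>y \<noteq> w\<close> by blast
  then have "x + y = - w" "x + w = - y"
    by simp_all
  with ry rw show ?thesis
    by simp
qed

theorem lemma2p3:
  fixes \<Sigma> :: "(real^'n) set set" and x :: "real^'n"
  assumes "toric_fano \<Sigma>"
  shows "(\<forall>y z w v. prim_rel2 \<Sigma> x y z \<and> prim_rel2 \<Sigma> x w v \<and> (y, z) \<noteq> (w, v)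
              \<longrightarrow> w = - x - y \<and> v = - y)
       \<and> card {P. x \<in> P \<and> primitive_collection \<Sigma> P \<and> card P = 2 \<and> prim_degree \<Sigma> P 1} \<le> 2
       \<and> (\<forall>y w. y \<noteq> w \<and> primitive_collection \<Sigma> {x, y} \<and> card {x, y} = 2 \<and> prim_degree \<Sigma> {x, y} 1
              \<and> primitive_collection \<Sigma> {x, w} \<and> card {x, w} = 2 \<and> prim_degree \<Sigma> {x, w} 1
              \<longrightarrow> prim_rel2 \<Sigma> x y (- w) \<and> prim_rel2 \<Sigma> x w (- y))"
  using prim_rel2_common_gen[OF assms] card_degree_one_pairs_le_2[OF assms]
    degree_one_pairs_relations[OF assms]
  by blast

end
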